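(* For every $k\in\mathbb{N}$ and every $a\ge\sqrt{2k+1}$, $$\int_{|x|\ge a}|\phi_k(x)|^2\,dx\le\frac{2^{k+1}}{k!\sqrt{\pi}}\,a^{2k-1}e^{-a^2}.$$
   Context: $\phi_k(x)=\frac{(-1)^k}{\sqrt{2^k k!\sqrt{\pi}}}e^{x^2/2}\frac{d^k}{dx^k}(e^{-x^2})$, $x\in\mathbb{R}$, $k\in\mathbb{N}$, are the one-dimensional Hermite functions. *)

theory Defs
  imports "HOL-Analysis.Analysis"
begin

definition hermite_fun :: "nat \<Rightarrow> real \<Rightarrow> real" where
  "hermite_fun k x =
     (-1) ^ k / sqrt (2 ^ k * fact k * sqrt pi) * exp (x\<^sup>2 / 2)
       * (deriv ^^ k) (\<lambda>t. exp (- t\<^sup>2)) x"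

end

theory Submission
  imports Defs "HOL-Real_Asymp.Real_Asymp"
begin

text \<open>By the Rodrigues formula, phi_k(x) = H_k(x) exp(-x^2/2) / sqrt(2^k k! sqrt pi) with the
  physicists' Hermite polynomial H_k. The three-term recurrence shows that
  x H_j(x) \<le> H_(j+1)(x) \<le> 2x H_j(x) as long as x^2 \<ge> 2j, hence
  phi_k(x)^2 \<le> 2^k x^(2k) exp(-x^2) / (k! sqrt pi) for x^2 \<ge> 2k. Once x^2 \<ge> 2k - 1, the function
  x^(2k) exp(-x^2) is dominated by the derivative of -x^(2k-1) exp(-x^2), so its integral over
  [a, \<infinity>) is at most a^(2k-1) exp(-a^2). Since phi_k^2 is even, the left tail contributes the same.\<close>

fun hermite_poly :: "nat \<Rightarrow> real \<Rightarrow> real" where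
  "hermite_poly 0 x = 1"
| "hermite_poly (Suc 0) x = 2 * x"
| "hermite_poly (Suc (Suc n)) x =
     2 * x * hermite_poly (Suc n) x - 2 * real (Suc n) * hermite_poly n x"

(* For n = 0 the truncated index n - 1 is harmless: it is multiplied by real n = 0. *)
lemma hermite_poly_Suc:
  "hermite_poly (Suc n) x = 2 * x * hermite_poly n x - 2 * real n * hermite_poly (n - 1) x"
  by (cases n) simp_all

lemma hermite_poly_has_real_derivative:
  "(hermite_poly n has_real_derivative 2 * real n * hermite_poly (n - 1) x) (at x)"
proof (induction n x rule: hermite_poly.induct)
  case (3 n x)
  have "hermite_poly (Suc (Suc n)) = (\<lambda>y. 2 * y * hermite_poly (Suc n) y - 2 * real (Suc n) * hermite_poly n y)"
    by auto
  moreover have "((\<lambda>y. 2 * y * hermite_poly (Suc n) y - 2 * real (Suc n) * hermite_poly n y)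
      has_real_derivative 2 * hermite_poly (Suc n) x + 2 * x * (2 * real (Suc n) * hermite_poly n x)
        - 2 * real (Suc n) * (2 * real n * hermite_poly (n - 1) x)) (at x)"
    using "3.IH" by (auto intro!: derivative_eq_intros)
  ultimately show ?case
    by (simp add: hermite_poly_Suc[of n] algebra_simps)
qed (auto intro!: derivative_eq_intros)

lemma continuous_on_hermite_poly: "continuous_on A (hermite_poly n)"
  using hermite_poly_has_real_derivative
  by (meson DERIV_isCont continuous_at_imp_continuous_on)

lemma hermite_poly_uminus: "hermite_poly n (- x) = (-1) ^ n * hermite_poly n x"
  by (induction n x rule: hermite_poly.induct) (auto simp: algebra_simps)

lemma higher_deriv_gaussian:
  "(deriv ^^ k) (\<lambda>t. exp (- t\<^sup>2)) = (\<lambda>x. (-1) ^ k * hermite_poly k x * exp (- x\<^sup>2))"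
proof (induction k)
  case (Suc k)
  have "((\<lambda>x. (-1) ^ k * hermite_poly k x * exp (- x\<^sup>2)) has_real_derivative
      (-1) ^ k * (2 * real k * hermite_poly (k - 1) x) * exp (- x\<^sup>2)
        + (-1) ^ k * hermite_poly k x * (exp (- x\<^sup>2) * (- (2 * x)))) (at x)" for x
    by (auto intro!: derivative_eq_intros hermite_poly_has_real_derivative)
  then have "deriv (\<lambda>x. (-1) ^ k * hermite_poly k x * exp (- x\<^sup>2)) x
      = (-1) ^ k * (2 * real k * hermite_poly (k - 1) x) * exp (- x\<^sup>2)
        + (-1) ^ k * hermite_poly k x * (exp (- x\<^sup>2) * (- (2 * x)))" for x
    by (rule DERIV_imp_deriv)
  then have deriv_eq: "deriv (\<lambda>x. (-1) ^ k * hermite_poly k x * exp (- x\<^sup>2)) x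
      = (-1) ^ Suc k * hermite_poly (Suc k) x * exp (- x\<^sup>2)" for x
    by (simp add: hermite_poly_Suc[of k] algebra_simps)
  have "(deriv ^^ Suc k) (\<lambda>t. exp (- t\<^sup>2)) = deriv (\<lambda>x. (-1) ^ k * hermite_poly k x * exp (- x\<^sup>2))"
    by (simp add: Suc.IH)
  also have "\<dots> = (\<lambda>x. (-1) ^ Suc k * hermite_poly (Suc k) x * exp (- x\<^sup>2))"
    using deriv_eq by (rule ext)
  finally show ?case .
qed simp

lemma hermite_fun_eq:
  "hermite_fun k x = hermite_poly k x * exp (- x\<^sup>2 / 2) / sqrt (2 ^ k * fact k * sqrt pi)"
proof -
  have "hermite_fun k x = ((-1) ^ k * (-1) ^ k) * hermite_poly k x * (exp (x\<^sup>2 / 2) * exp (- x\<^sup>2))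
      / sqrt (2 ^ k * fact k * sqrt pi)"
    by (simp add: hermite_fun_def higher_deriv_gaussian algebra_simps)
  also have "exp (x\<^sup>2 / 2) * exp (- x\<^sup>2) = exp (- x\<^sup>2 / 2)"
    by (simp flip: exp_add)
  also have "(-1::real) ^ k * (-1) ^ k = 1"
    by (simp flip: power_add)
  finally show ?thesis
    by simp
qed

lemma hermite_fun_sq:
  "(hermite_fun k x)\<^sup>2 = (hermite_poly k x)\<^sup>2 * exp (- x\<^sup>2) / (2 ^ k * fact k * sqrt pi)"
proof -
  have "exp (- x\<^sup>2 / 2) ^ 2 = exp (- x\<^sup>2)"
    by (simp flip: exp_of_nat_mult)
  then show ?thesis
    by (simp add: hermite_fun_eq power_mult_distrib power_divide)
qed

lemma hermite_fun_sq_uminus: "(hermite_fun k (- x))\<^sup>2 = (hermite_fun k x)\<^sup>2"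
  by (simp add: hermite_fun_sq hermite_poly_uminus power_mult_distrib flip: power_mult)

lemma borel_measurable_hermite_fun [measurable]: "hermite_fun k \<in> borel_measurable borel"
proof -
  have "hermite_fun k = (\<lambda>x. hermite_poly k x * exp (- x\<^sup>2 / 2) / sqrt (2 ^ k * fact k * sqrt pi))"
    by (simp add: fun_eq_iff hermite_fun_eq)
  moreover have "hermite_poly k \<in> borel_measurable borel"
    by (intro borel_measurable_continuous_onI continuous_on_hermite_poly)
  ultimately show ?thesis
    by simp
qed

lemma hermite_poly_growth:
  assumes "0 < x" "2 * real n \<le> x\<^sup>2"
  shows "0 < hermite_poly n x \<and> x * hermite_poly n x \<le> hermite_poly (Suc n) x
    \<and> hermite_poly (Suc n) x \<le> 2 * x * hermite_poly n x"
  using assms(2)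
proof (induction n)
  case (Suc n)
  then have IH: "0 < hermite_poly n x" "x * hermite_poly n x \<le> hermite_poly (Suc n) x"
    by auto
  have pos: "0 < hermite_poly (Suc n) x"
    using IH assms(1) by (smt (verit) mult_pos_pos)
  have "2 * real (Suc n) * hermite_poly n x \<le> x * x * hermite_poly n x"
    using Suc.prems IH(1) by (simp add: power2_eq_square mult_right_mono)
  also have "\<dots> \<le> x * hermite_poly (Suc n) x"
    using IH(2) assms(1) by (simp add: mult.assoc)
  finally show ?case
    using pos IH(1) by simp
qed (use assms(1) in simp)

lemma abs_hermite_poly_le:
  assumes "2 * real n \<le> x\<^sup>2"
  shows "\<bar>hermite_poly n x\<bar> \<le> (2 * \<bar>x\<bar>) ^ n"
proof -
  have pos_case: "\<bar>hermite_poly n y\<bar> \<le> (2 * y) ^ n" if "0 < y" "2 * real n \<le> y\<^sup>2" for y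
    using that
  proof (induction n)
    case (Suc n)
    then have "0 < hermite_poly n y" "hermite_poly (Suc n) y \<le> 2 * y * hermite_poly n y"
      "0 < hermite_poly (Suc n) y" "\<bar>hermite_poly n y\<bar> \<le> (2 * y) ^ n"
      using hermite_poly_growth[of y n] hermite_poly_growth[of y "Suc n"] by auto
    then show ?case
      using \<open>0 < y\<close> by (simp add: mult_left_mono order_trans)
  qed simp
  consider "0 < x" | "x = 0" | "0 < - x"
    by linarith
  then show ?thesis
  proof cases
    case 2
    then show ?thesis
      using assms by (cases n) auto
  next
    case 3
    then show ?thesis
      using pos_case[of "- x"] assms by (simp add: hermite_poly_uminus abs_mult)
  qed (use pos_case assms in simp)
qed

lemma hermite_fun_sq_le:
  assumes "2 * real k \<le> x\<^sup>2"
  shows "(hermite_fun k x)\<^sup>2 \<le> 2 ^ k / (fact k * sqrt pi) * (x ^ (2 * k) * exp (- x\<^sup>2))"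
proof -
  have "(hermite_poly k x)\<^sup>2 \<le> ((2 * \<bar>x\<bar>) ^ k)\<^sup>2"
    using abs_hermite_poly_le[OF assms] by (metis abs_ge_zero power2_abs power_mono)
  also have "\<dots> = 2 ^ k * 2 ^ k * x ^ (2 * k)"
    by (simp add: power_mult_distrib power_even_abs ac_simps flip: power_mult power_add mult_2)
  finally have "(hermite_poly k x)\<^sup>2 * exp (- x\<^sup>2) / (2 ^ k * fact k * sqrt pi)
      \<le> 2 ^ k * 2 ^ k * x ^ (2 * k) * exp (- x\<^sup>2) / (2 ^ k * fact k * sqrt pi)"
    by (intro divide_right_mono mult_right_mono) auto
  then show ?thesis
    by (simp add: hermite_fun_sq field_simps)
qed

lemma gaussian_tail_nn_integral_le:
  fixes a p :: real
  assumes "0 < a" "p \<le> a\<^sup>2"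
  shows "(\<integral>\<^sup>+x. ennreal (x powr (p + 1) * exp (- x\<^sup>2)) * indicator {a..} x \<partial>lborel)
    \<le> ennreal (a powr p * exp (- a\<^sup>2))"
proof -
  define F where "F x = - (x powr p * exp (- x\<^sup>2))" for x :: real
  define f where "f x = (2 * x powr (p + 1) - p * x powr (p - 1)) * exp (- x\<^sup>2)" for x :: real
  have F_deriv: "(F has_real_derivative f x) (at x)" if "a \<le> x" for x
  proof -
    have "0 < x"
      using assms that by simp
    then have "(F has_real_derivative
        - (p * x powr (p - 1) * exp (- x\<^sup>2) + x powr p * (exp (- x\<^sup>2) * (- (2 * x))))) (at x)"
      unfolding F_def[abs_def] by (auto intro!: derivative_eq_intros)
    moreover have "x powr (p + 1) = x * x powr p"
      using \<open>0 < x\<close> by (simp add: powr_add)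
    ultimately show ?thesis
      unfolding f_def by (simp add: algebra_simps)
  qed
  have integrand_le: "x powr (p + 1) * exp (- x\<^sup>2) \<le> f x" if "a \<le> x" for x
  proof -
    have "0 < x"
      using assms that by simp
    have "a\<^sup>2 \<le> x\<^sup>2"
      using assms that by (intro power_mono) auto
    then have "p * x powr (p - 1) \<le> x\<^sup>2 * x powr (p - 1)"
      using assms by (intro mult_right_mono) auto
    also have "\<dots> = x powr 2 * x powr (p - 1)"
      using \<open>0 < x\<close> by (simp add: powr_numeral)
    also have "\<dots> = x powr (p + 1)"
      by (simp add: powr_add[symmetric] add.commute)
    finally show ?thesis
      by (simp add: f_def mult_right_mono)
  qed
  have f_nonneg: "0 \<le> f x" if "a \<le> x" for x
    by (rule order_trans[OF _ integrand_le[OF that]]) simp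
  have "(F \<longlongrightarrow> 0) at_top"
    unfolding F_def by real_asymp
  then have "(\<integral>\<^sup>+x. ennreal (f x) * indicator {a..} x \<partial>lborel) = ennreal (0 - F a)"
    using F_deriv f_nonneg by (intro nn_integral_FTC_atLeast) (simp_all add: f_def)
  moreover have "(\<integral>\<^sup>+x. ennreal (x powr (p + 1) * exp (- x\<^sup>2)) * indicator {a..} x \<partial>lborel)
      \<le> (\<integral>\<^sup>+x. ennreal (f x) * indicator {a..} x \<partial>lborel)"
    using integrand_le by (intro nn_integral_mono) (simp add: indicator_def ennreal_leI)
  ultimately show ?thesis
    by (simp add: F_def)
qed

lemma nn_integral_abs_ge_le_even:
  fixes g :: "real \<Rightarrow> ennreal"
  assumes [measurable]: "g \<in> borel_measurable borel" and even: "\<And>x. g (- x) = g x"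
  shows "(\<integral>\<^sup>+x. g x * indicator {x. a \<le> \<bar>x\<bar>} x \<partial>lborel)
    \<le> 2 * (\<integral>\<^sup>+x. g x * indicator {a..} x \<partial>lborel)"
proof -
  have "(\<integral>\<^sup>+x. g x * indicator {x. a \<le> \<bar>x\<bar>} x \<partial>lborel)
      \<le> (\<integral>\<^sup>+x. g x * indicator {a..} x + g (- x) * indicator {a..} (- x) \<partial>lborel)"
    by (intro nn_integral_mono) (auto simp: indicator_def even)
  also have "\<dots> = (\<integral>\<^sup>+x. g x * indicator {a..} x \<partial>lborel)
      + (\<integral>\<^sup>+x. g (- x) * indicator {a..} (- x) \<partial>lborel)"
    by (intro nn_integral_add) auto
  also have "(\<integral>\<^sup>+x. g (- x) * indicator {a..} (- x) \<partial>lborel)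
      = (\<integral>\<^sup>+x. g x * indicator {a..} x \<partial>lborel)"
    using nn_integral_real_affine[of "\<lambda>x. g x * indicator {a..} x" "-1" 0] by simp
  finally show ?thesis
    by (simp add: mult_2)
qed

lemma hermite_fun_sq_right_tail_le:
  assumes "0 < a" "2 * real k \<le> a\<^sup>2"
  shows "(\<integral>\<^sup>+x. ennreal ((hermite_fun k x)\<^sup>2) * indicator {a..} x \<partial>lborel)
    \<le> ennreal (2 ^ k / (fact k * sqrt pi) * (a powr (2 * real k - 1) * exp (- a\<^sup>2)))"
proof -
  define C :: real where "C = 2 ^ k / (fact k * sqrt pi)"
  have "0 \<le> C"
    by (simp add: C_def)
  have pointwise: "(hermite_fun k x)\<^sup>2 \<le> C * (x powr (2 * real k - 1 + 1) * exp (- x\<^sup>2))" if "a \<le> x" for x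
  proof -
    have "a\<^sup>2 \<le> x\<^sup>2"
      using assms that by (intro power_mono) auto
    then have "2 * real k \<le> x\<^sup>2"
      using assms by linarith
    moreover have "x powr (2 * real k - 1 + 1) = x ^ (2 * k)"
      using powr_realpow[of x "2 * k"] assms that by simp
    ultimately show ?thesis
      using hermite_fun_sq_le by (simp add: C_def)
  qed
  have "(\<integral>\<^sup>+x. ennreal ((hermite_fun k x)\<^sup>2) * indicator {a..} x \<partial>lborel)
      \<le> (\<integral>\<^sup>+x. ennreal C * (ennreal (x powr (2 * real k - 1 + 1) * exp (- x\<^sup>2)) * indicator {a..} x) \<partial>lborel)"
    using ennreal_leI[OF pointwise] \<open>0 \<le> C\<close>
    by (intro nn_integral_mono) (simp add: indicator_def ennreal_mult')
  also have "\<dots> = ennreal C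
      * (\<integral>\<^sup>+x. ennreal (x powr (2 * real k - 1 + 1) * exp (- x\<^sup>2)) * indicator {a..} x \<partial>lborel)"
    by (simp add: nn_integral_cmult)
  also have "\<dots> \<le> ennreal C * ennreal (a powr (2 * real k - 1) * exp (- a\<^sup>2))"
    using gaussian_tail_nn_integral_le[of a "2 * real k - 1"] assms
    by (intro mult_left_mono) simp_all
  also have "\<dots> = ennreal (C * (a powr (2 * real k - 1) * exp (- a\<^sup>2)))"
    using \<open>0 \<le> C\<close> by (rule ennreal_mult'[symmetric])
  finally show ?thesis
    unfolding C_def .
qed

theorem mainTheorem6:
  fixes k :: nat and a :: real
  assumes "a \<ge> sqrt (2 * real k + 1)"
  shows "(LINT x:{x. \<bar>x\<bar> \<ge> a}|lborel. \<bar>hermite_fun k x\<bar>\<^sup>2)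
           \<le> 2 ^ (k + 1) / (fact k * sqrt pi) * a powr (2 * real k - 1) * exp (- a\<^sup>2)"
proof -
  have "0 < a"
    using assms by (smt (verit) real_sqrt_ge_one of_nat_0_le_iff)
  have "2 * real k + 1 \<le> a\<^sup>2"
    using assms by (rule sqrt_le_D)
  have "(\<integral>\<^sup>+x. ennreal (indicator {x. a \<le> \<bar>x\<bar>} x *\<^sub>R \<bar>hermite_fun k x\<bar>\<^sup>2) \<partial>lborel)
      = (\<integral>\<^sup>+x. ennreal ((hermite_fun k x)\<^sup>2) * indicator {x. a \<le> \<bar>x\<bar>} x \<partial>lborel)"
    by (intro nn_integral_cong) (simp add: indicator_def)
  also have "\<dots> \<le> 2 * (\<integral>\<^sup>+x. ennreal ((hermite_fun k x)\<^sup>2) * indicator {a..} x \<partial>lborel)"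
    by (intro nn_integral_abs_ge_le_even) (simp_all add: hermite_fun_sq_uminus)
  also have "\<dots> \<le> 2 * ennreal (2 ^ k / (fact k * sqrt pi) * (a powr (2 * real k - 1) * exp (- a\<^sup>2)))"
    using hermite_fun_sq_right_tail_le[of a k] \<open>0 < a\<close> \<open>2 * real k + 1 \<le> a\<^sup>2\<close>
    by (intro mult_left_mono) simp_all
  also have "\<dots> = ennreal (2 * (2 ^ k / (fact k * sqrt pi) * (a powr (2 * real k - 1) * exp (- a\<^sup>2))))"
    by (simp only: ennreal_mult'[OF zero_le_numeral] ennreal_numeral)
  also have "2 * (2 ^ k / (fact k * sqrt pi) * (a powr (2 * real k - 1) * exp (- a\<^sup>2)))
      = 2 ^ (k + 1) / (fact k * sqrt pi) * a powr (2 * real k - 1) * exp (- a\<^sup>2)"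
    by simp
  finally show ?thesis
    unfolding set_lebesgue_integral_def by (intro integral_real_bounded) simp_all
qed

end
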